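(* Let $\mathcal V$ be a finite alphabet, $\mathcal V^*$ the set of finite strings over $\mathcal V$, $e$ an environment and $p$ a probability distribution on test suites $t\in\mathcal V^*$. Let $$\mathrm{sim}_{p,e}(c_1,c_2):=\mathbb E_{t\sim p}\Big[\tfrac{1}{|t|}\sum_{k=1}^{|t|}\mathbf 1\{O_k(c_1,t\mid e)=O_k(c_2,t\mid e)\}\Big]$$ and, for $s\in\mathbb N$, $\mathrm{sim}^s_{p,e}(c_1,c_2):=\mathrm{sim}_{p,e}(c_1,c_2)^s$. Define functional equivalence $$\mathrm{sim}^\infty_{p,e}(c_1,c_2):=\mathbf 1\{O(c_1,t\mid e)=O(c_2,t\mid e)\ \text{for all } t\in\mathcal V^* \text{ with } p(t)>0\}.$$ Then for every $s\in\mathbb N$, $\mathrm{sim}^s_{p,e}$ is a positive semi-definite kernel on $\mathcal V^*$, and for all $c_1,c_2\in\mathcal V^*$, $\lim_{s\to\infty}\mathrm{sim}^s_{p,e}(c_1,c_2)=\mathrm{sim}^\infty_{p,e}(c_1,c_2)$.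
   Context: A test suite $t\in\mathcal V^*$ consists of $|t|\ge 1$ test cases. For an environment $e$, an implementation $c\in\mathcal V^*$ and a test suite $t$, the test harness returns a deterministic output vector $O(c,t\mid e)=(O_1(c,t\mid e),\dots,O_{|t|}(c,t\mid e))\in\mathbb O^{|t|}$ for a set $\mathbb O$ of possible test outputs. *)

theory Defs
  imports "HOL-Probability.Probability"
begin

text \<open>Per-suite agreement fraction: (1/|t|) * #{k in 1..|t|. O_k(c1,t|e) = O_k(c2,t|e)},
  where the output vector O(c,t|e) is the list Out e c t and O_k is its k-th entry (1-based).\<close>
definition agree_frac :: "('e \<Rightarrow> 'v list \<Rightarrow> 'v list \<Rightarrow> 'o list) \<Rightarrow> 'e \<Rightarrow> 'v list \<Rightarrow> 'v list \<Rightarrow> 'v list \<Rightarrow> real" where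
  "agree_frac Out e c1 c2 t =
     (1 / real (length t)) * (\<Sum>k\<in>{1..length t}. if Out e c1 t ! (k - 1) = Out e c2 t ! (k - 1) then 1 else 0)"

definition sim :: "'v list pmf \<Rightarrow> ('e \<Rightarrow> 'v list \<Rightarrow> 'v list \<Rightarrow> 'o list) \<Rightarrow> 'e \<Rightarrow> 'v list \<Rightarrow> 'v list \<Rightarrow> real" where
  "sim p Out e c1 c2 = measure_pmf.expectation p (\<lambda>t. agree_frac Out e c1 c2 t)"

definition sim_pow :: "nat \<Rightarrow> 'v list pmf \<Rightarrow> ('e \<Rightarrow> 'v list \<Rightarrow> 'v list \<Rightarrow> 'o list) \<Rightarrow> 'e \<Rightarrow> 'v list \<Rightarrow> 'v list \<Rightarrow> real" where
  "sim_pow s p Out e c1 c2 = (sim p Out e c1 c2) ^ s"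

definition sim_inf :: "'v list pmf \<Rightarrow> ('e \<Rightarrow> 'v list \<Rightarrow> 'v list \<Rightarrow> 'o list) \<Rightarrow> 'e \<Rightarrow> 'v list \<Rightarrow> 'v list \<Rightarrow> real" where
  "sim_inf p Out e c1 c2 = (if (\<forall>t. pmf p t > 0 \<longrightarrow> Out e c1 t = Out e c2 t) then 1 else 0)"

definition psd_kernel :: "'a set \<Rightarrow> ('a \<Rightarrow> 'a \<Rightarrow> real) \<Rightarrow> bool" where
  "psd_kernel X K \<longleftrightarrow>
     (\<forall>x\<in>X. \<forall>y\<in>X. K x y = K y x) \<and>
     (\<forall>n (x :: nat \<Rightarrow> 'a) (a :: nat \<Rightarrow> real). (\<forall>i<n. x i \<in> X) \<longrightarrow>
        (\<Sum>i<n. \<Sum>j<n. a i * a j * K (x i) (x j)) \<ge> 0)"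

end

theory Submission
  imports Defs
begin

text \<open>The similarity is an average, over suites \<open>t\<close> and positions \<open>k\<close>, of the indicator kernels
  \<open>[O\<^sub>k(c\<^sub>1,t) = O\<^sub>k(c\<^sub>2,t)]\<close>. Multiplying a positive semi-definite kernel by such an indicator
  keeps it positive semi-definite: the indicator is a sum, over the common output value \<open>v\<close>, of the
  rank-one kernels \<open>[O\<^sub>k(c\<^sub>1,t) = v] [O\<^sub>k(c\<^sub>2,t) = v]\<close>, so the quadratic form splits into quadratic
  forms of the original kernel with coefficients restricted to one value class each. Sums, nonnegative
  multiples and expectations preserve positive semi-definiteness, hence so does multiplication by the
  similarity, and \<open>sim\<^sup>s\<close> is positive semi-definite by induction on \<open>s\<close>.

  For the limit, the similarity lies in \<open>[0,1]\<close> and equals \<open>1\<close> exactly when the outputs agree on every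
  suite in the support of \<open>p\<close>; so its powers tend to \<open>1\<close> in that case and to \<open>0\<close> otherwise.\<close>

lemma psd_kernelI:
  fixes K :: "'a \<Rightarrow> 'a \<Rightarrow> real"
  assumes "\<And>x y. x \<in> X \<Longrightarrow> y \<in> X \<Longrightarrow> K x y = K y x"
    and "\<And>n x (a :: nat \<Rightarrow> real). (\<And>i :: nat. i < n \<Longrightarrow> x i \<in> X) \<Longrightarrow>
           0 \<le> (\<Sum>i<n. \<Sum>j<n. a i * a j * K (x i) (x j))"
  shows "psd_kernel X K"
  using assms unfolding psd_kernel_def by auto

lemma psd_kernelD:
  fixes K :: "'a \<Rightarrow> 'a \<Rightarrow> real"
  assumes "psd_kernel X K"
  shows psd_kernel_commute: "\<And>x y. x \<in> X \<Longrightarrow> y \<in> X \<Longrightarrow> K x y = K y x"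
    and psd_kernel_quadratic_form_nonneg:
      "\<And>n x (a :: nat \<Rightarrow> real). (\<And>i :: nat. i < n \<Longrightarrow> x i \<in> X) \<Longrightarrow>
         0 \<le> (\<Sum>i<n. \<Sum>j<n. a i * a j * K (x i) (x j))"
  using assms unfolding psd_kernel_def by auto

lemma psd_kernel_const_one: "psd_kernel X (\<lambda>_ _. 1)"
proof (rule psd_kernelI)
  fix n and x :: "nat \<Rightarrow> 'a" and a :: "nat \<Rightarrow> real"
  have "(\<Sum>i<n. \<Sum>j<n. a i * a j * 1) = (\<Sum>i<n. a i)\<^sup>2"
    by (simp add: power2_eq_square sum_product)
  then show "0 \<le> (\<Sum>i<n. \<Sum>j<n. a i * a j * 1)" by simp
qed simp

lemma psd_kernel_cmult:
  assumes "psd_kernel X K" and "0 \<le> c"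
  shows "psd_kernel X (\<lambda>x y. c * K x y)"
proof (rule psd_kernelI)
  fix n :: nat and x and a :: "nat \<Rightarrow> real"
  assume "\<And>i. i < n \<Longrightarrow> x i \<in> X"
  then have "0 \<le> c * (\<Sum>i<n. \<Sum>j<n. a i * a j * K (x i) (x j))"
    using assms by (simp add: psd_kernel_quadratic_form_nonneg)
  then show "0 \<le> (\<Sum>i<n. \<Sum>j<n. a i * a j * (c * K (x i) (x j)))"
    by (simp add: sum_distrib_left mult_ac)
next
  fix x y assume "x \<in> X" "y \<in> X"
  with assms(1) show "c * K x y = c * K y x"
    by (simp only: psd_kernel_commute)
qed

lemma psd_kernel_sum:
  assumes "\<And>k. k \<in> I \<Longrightarrow> psd_kernel X (K k)"
  shows "psd_kernel X (\<lambda>x y. \<Sum>k\<in>I. K k x y)"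
proof (rule psd_kernelI)
  fix n :: nat and x and a :: "nat \<Rightarrow> real"
  assume x: "\<And>i. i < n \<Longrightarrow> x i \<in> X"
  have "0 \<le> (\<Sum>i<n. \<Sum>j<n. a i * a j * K k (x i) (x j))" if "k \<in> I" for k
    using assms[OF that] x by (rule psd_kernel_quadratic_form_nonneg)
  then have "0 \<le> (\<Sum>k\<in>I. \<Sum>i<n. \<Sum>j<n. a i * a j * K k (x i) (x j))"
    by (rule sum_nonneg)
  then show "0 \<le> (\<Sum>i<n. \<Sum>j<n. a i * a j * (\<Sum>k\<in>I. K k (x i) (x j)))"
    by (simp add: sum_distrib_left sum.swap[of _ I])
next
  fix x y assume "x \<in> X" "y \<in> X"
  have "K k x y = K k y x" if "k \<in> I" for k
    using assms[OF that] \<open>x \<in> X\<close> \<open>y \<in> X\<close> by (rule psd_kernel_commute)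
  then show "(\<Sum>k\<in>I. K k x y) = (\<Sum>k\<in>I. K k y x)"
    by (rule sum.cong[OF refl])
qed

lemma psd_kernel_integral:
  fixes K :: "'b \<Rightarrow> 'a \<Rightarrow> 'a \<Rightarrow> real"
  assumes psd: "\<And>t. t \<in> space M \<Longrightarrow> psd_kernel X (K t)"
    and integrable: "\<And>x y. x \<in> X \<Longrightarrow> y \<in> X \<Longrightarrow> integrable M (\<lambda>t. K t x y)"
  shows "psd_kernel X (\<lambda>x y. \<integral>t. K t x y \<partial>M)"
proof (rule psd_kernelI)
  fix x y assume "x \<in> X" "y \<in> X"
  have "K t x y = K t y x" if "t \<in> space M" for t
    using psd[OF that] \<open>x \<in> X\<close> \<open>y \<in> X\<close> by (rule psd_kernel_commute)
  then show "(\<integral>t. K t x y \<partial>M) = (\<integral>t. K t y x \<partial>M)"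
    by (rule Bochner_Integration.integral_cong[OF refl])
next
  fix n :: nat and x and a :: "nat \<Rightarrow> real"
  assume x: "\<And>i. i < n \<Longrightarrow> x i \<in> X"
  have "(\<Sum>i<n. \<Sum>j<n. a i * a j * (\<integral>t. K t (x i) (x j) \<partial>M))
           = (\<integral>t. (\<Sum>i<n. \<Sum>j<n. a i * a j * K t (x i) (x j)) \<partial>M)"
    by (subst Bochner_Integration.integral_sum)
       (auto simp: integrable x Bochner_Integration.integral_sum)
  also have "\<dots> \<ge> 0"
    by (rule Bochner_Integration.integral_nonneg) (rule psd_kernel_quadratic_form_nonneg[OF psd x])
  finally show "0 \<le> (\<Sum>i<n. \<Sum>j<n. a i * a j * (\<integral>t. K t (x i) (x j) \<partial>M))" .
qed

lemma psd_kernel_mult_of_bool_eq: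
  assumes "psd_kernel X K"
  shows "psd_kernel X (\<lambda>x y. K x y * of_bool (F x = F y))"
proof (rule psd_kernelI)
  fix n :: nat and x and a :: "nat \<Rightarrow> real"
  assume x: "\<And>i. i < n \<Longrightarrow> x i \<in> X"
  define V where "V = F ` x ` {..<n}"
  define b where "b v i = a i * of_bool (F (x i) = v)" for v i
  have of_bool_eq:
    "of_bool (F (x i) = F (x j)) = (\<Sum>v\<in>V. of_bool (F (x i) = v) * of_bool (F (x j) = v) :: real)"
    if "i < n" for i j
  proof -
    have "(\<Sum>v\<in>V. of_bool (F (x i) = v) * of_bool (F (x j) = v))
        = (\<Sum>v\<in>V. if v = F (x i) then of_bool (F (x j) = F (x i)) else 0 :: real)"
      by (rule sum.cong) auto
    also have "\<dots> = of_bool (F (x i) = F (x j))"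
      using that by (simp add: V_def eq_commute)
    finally show ?thesis by (rule sym)
  qed
  have "(\<Sum>i<n. \<Sum>j<n. a i * a j * (K (x i) (x j) * of_bool (F (x i) = F (x j))))
      = (\<Sum>i<n. \<Sum>j<n. \<Sum>v\<in>V. b v i * b v j * K (x i) (x j))"
    by (intro sum.cong refl) (simp add: of_bool_eq b_def sum_distrib_left mult_ac)
  also have "\<dots> = (\<Sum>v\<in>V. \<Sum>i<n. \<Sum>j<n. b v i * b v j * K (x i) (x j))"
    by (simp only: sum.swap[where A = "{..<n}" and B = V])
  also have "\<dots> \<ge> 0"
    by (rule sum_nonneg) (rule psd_kernel_quadratic_form_nonneg[OF assms x])
  finally show "0 \<le> (\<Sum>i<n. \<Sum>j<n. a i * a j * (K (x i) (x j) * of_bool (F (x i) = F (x j))))" .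
qed (use assms psd_kernel_commute in fastforce)

lemma agree_frac_altdef:
  "agree_frac Out e c1 c2 t = (\<Sum>k<length t. of_bool (Out e c1 t ! k = Out e c2 t ! k)) / length t"
  unfolding agree_frac_def One_nat_def sum.atLeast1_atMost_eq
  by (simp add: of_bool_def del: sum_of_bool_eq)

lemma agree_frac_nonneg: "0 \<le> agree_frac Out e c1 c2 t"
  by (simp add: agree_frac_altdef sum_nonneg)

lemma agree_frac_le_one: "agree_frac Out e c1 c2 t \<le> 1"
proof -
  have "(\<Sum>k<length t. of_bool (Out e c1 t ! k = Out e c2 t ! k)) \<le> (\<Sum>k<length t. 1 :: real)"
    by (intro sum_mono) simp
  then show ?thesis
    by (simp add: agree_frac_altdef divide_le_eq_1)
qed

lemma agree_frac_eq_one_iff: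
  assumes "t \<noteq> []" and "length (Out e c1 t) = length t" and "length (Out e c2 t) = length t"
  shows "agree_frac Out e c1 c2 t = 1 \<longleftrightarrow> Out e c1 t = Out e c2 t"
proof -
  have "agree_frac Out e c1 c2 t = 1
      \<longleftrightarrow> (\<Sum>k<length t. 1 - of_bool (Out e c1 t ! k = Out e c2 t ! k) :: real) = 0"
    using assms(1) by (simp add: agree_frac_altdef sum_subtractf)
  also have "\<dots> \<longleftrightarrow> (\<forall>k<length t. Out e c1 t ! k = Out e c2 t ! k)"
    by (subst sum_nonneg_eq_0_iff) auto
  also have "\<dots> \<longleftrightarrow> Out e c1 t = Out e c2 t"
    using assms(2,3) by (simp add: list_eq_iff_nth_eq)
  finally show ?thesis .
qed

lemma integrable_agree_frac: "integrable (measure_pmf p) (agree_frac Out e c1 c2)"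
  by (rule measure_pmf.integrable_const_bound[where B = 1])
     (simp_all add: agree_frac_nonneg agree_frac_le_one)

lemma psd_kernel_mult_agree_frac:
  assumes "psd_kernel X K"
  shows "psd_kernel X (\<lambda>x y. K x y * agree_frac Out e x y t)"
proof -
  have "psd_kernel X (\<lambda>x y. \<Sum>k<length t. K x y * of_bool (Out e x t ! k = Out e y t ! k))"
    by (rule psd_kernel_sum, rule psd_kernel_mult_of_bool_eq[OF assms])
  then have "psd_kernel X
      (\<lambda>x y. 1 / length t * (\<Sum>k<length t. K x y * of_bool (Out e x t ! k = Out e y t ! k)))"
    by (rule psd_kernel_cmult) simp
  then show ?thesis
    unfolding agree_frac_altdef sum_distrib_left[symmetric] by (simp add: mult_ac)
qed

lemma psd_kernel_mult_sim:
  assumes "psd_kernel X K"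
  shows "psd_kernel X (\<lambda>x y. K x y * sim p Out e x y)"
proof -
  have "psd_kernel X (\<lambda>x y. \<integral>t. K x y * agree_frac Out e x y t \<partial>p)"
    using psd_kernel_mult_agree_frac[OF assms] integrable_mult_right[OF integrable_agree_frac]
    by (rule psd_kernel_integral)
  then show ?thesis
    by (simp add: sim_def)
qed

lemma psd_kernel_sim_pow: "psd_kernel X (sim_pow s p Out e)"
proof (induction s)
  case 0
  show ?case by (simp add: sim_pow_def psd_kernel_const_one)
next
  case (Suc s)
  have "sim_pow (Suc s) p Out e = (\<lambda>x y. sim_pow s p Out e x y * sim p Out e x y)"
    by (simp add: sim_pow_def fun_eq_iff mult.commute)
  then show ?case
    using psd_kernel_mult_sim[OF Suc.IH] by simp
qed

lemma sim_nonneg: "0 \<le> sim p Out e c1 c2"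
  unfolding sim_def by (simp add: agree_frac_nonneg)

lemma sim_le_one: "sim p Out e c1 c2 \<le> 1"
proof -
  have "sim p Out e c1 c2 \<le> (\<integral>t. 1 \<partial>p)"
    unfolding sim_def by (intro integral_mono integrable_agree_frac agree_frac_le_one) simp
  then show ?thesis by simp
qed

lemma sim_eq_one_iff:
  assumes "\<And>t. t \<in> set_pmf p \<Longrightarrow> t \<noteq> []"
    and "\<And>t. length (Out e c1 t) = length t" and "\<And>t. length (Out e c2 t) = length t"
  shows "sim p Out e c1 c2 = 1 \<longleftrightarrow> (\<forall>t \<in> set_pmf p. Out e c1 t = Out e c2 t)"
proof -
  have "sim p Out e c1 c2 = 1 \<longleftrightarrow> (\<integral>t. 1 - agree_frac Out e c1 c2 t \<partial>p) = 0"
    unfolding sim_def by (simp add: integrable_agree_frac)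
  also have "\<dots> \<longleftrightarrow> (AE t in p. 1 - agree_frac Out e c1 c2 t = 0)"
    by (intro integral_nonneg_eq_0_iff_AE) (simp_all add: integrable_agree_frac agree_frac_le_one)
  also have "\<dots> \<longleftrightarrow> (\<forall>t \<in> set_pmf p. Out e c1 t = Out e c2 t)"
    using assms by (simp add: AE_measure_pmf_iff agree_frac_eq_one_iff)
  finally show ?thesis .
qed

lemma LIMSEQ_power_of_bool_eq_1:
  fixes x :: real
  assumes "0 \<le> x" and "x \<le> 1"
  shows "(\<lambda>n. x ^ n) \<longlonglongrightarrow> of_bool (x = 1)"
  using assms by (cases "x = 1") (simp_all add: LIMSEQ_power_zero)

lemma sim_pow_tendsto_sim_inf:
  assumes "\<And>t. t \<in> set_pmf p \<Longrightarrow> t \<noteq> []"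
    and "\<And>t. length (Out e c1 t) = length t" and "\<And>t. length (Out e c2 t) = length t"
  shows "(\<lambda>s. sim_pow s p Out e c1 c2) \<longlonglongrightarrow> sim_inf p Out e c1 c2"
proof -
  have "sim_inf p Out e c1 c2 = of_bool (sim p Out e c1 c2 = 1)"
    using sim_eq_one_iff[of p Out e c1 c2] assms by (auto simp: sim_inf_def pmf_positive_iff)
  then show ?thesis
    unfolding sim_pow_def by (simp add: LIMSEQ_power_of_bool_eq_1 sim_nonneg sim_le_one)
qed

theorem proposition4p4:
  fixes p :: "('v::finite) list pmf"
    and Out :: "'e \<Rightarrow> 'v list \<Rightarrow> 'v list \<Rightarrow> 'o list"
    and e :: 'e
  assumes suites_nonempty: "\<And>t. t \<in> set_pmf p \<Longrightarrow> length t \<ge> 1"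
    and output_length: "\<And>c t. length (Out e c t) = length t"
  shows "(\<forall>s::nat. psd_kernel (UNIV :: 'v list set) (sim_pow s p Out e))
       \<and> (\<forall>c1 c2. (\<lambda>s. sim_pow s p Out e c1 c2) \<longlonglongrightarrow> sim_inf p Out e c1 c2)"
proof (intro conjI allI)
  show "psd_kernel UNIV (sim_pow s p Out e)" for s
    by (rule psd_kernel_sim_pow)
  show "(\<lambda>s. sim_pow s p Out e c1 c2) \<longlonglongrightarrow> sim_inf p Out e c1 c2" for c1 c2
    using suites_nonempty by (intro sim_pow_tendsto_sim_inf output_length) fastforce
qed

end
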